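(* Suppose $\psi_1(u)\le\psi_1(u')\exp(C_3|u-u'|)$ for all $u,u'\in\mathbb R$ (with $C_3\ge0$) and $\max_{0\le j\le q}|g_j(\bm X)|\le C_4$ a.s. Then for any $\alpha,\tilde\alpha\in\mathbb R^{q+1}$, with $b=\alpha-\tilde\alpha$ and $C_{40}=C_3C_4$, $$D^\dagger_{\rm WL}(\alpha^\top\bm G,\tilde\alpha^\top\bm G;\bar\gamma)\ge\{b^\top\tilde{\bm\Sigma}_\alpha(\tilde\alpha)b\}\frac{1-\exp(-C_{40}\|b\|_1)}{C_{40}\|b\|_1},$$ where $\tilde{\bm\Sigma}_\alpha(\tilde\alpha)=\tilde{\mathbb E}[Rw(\bm X;\bar\gamma)\psi_1(\tilde\alpha^\top\bm G)\bm G\bm G^\top]$, and $\{1-\exp(-c)\}/c$ is interpreted as $1$ when $c=0$.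
   Context: $\tilde{\mathbb E}$ is the sample mean over observations $(\bm X_i,Y_i,R_i)$ with $R_i\in\{0,1\}$. $\bm F$ and $\bm G=(g_0,\dots,g_q)^\top$ are vectors of functions of $\bm X$. $w(\bm X;\gamma)=\exp(-\gamma^\top\bm F)$, and $\bar\gamma$ is a fixed vector. $\psi$ is an increasing differentiable inverse link with derivative $\psi_1$. $D^\dagger_{\rm WL}(h,h';\gamma)=\tilde{\mathbb E}[Rw(\bm X;\gamma)\{\psi(h)-\psi(h')\}(h-h')]$. *)

theory Defs
  imports "HOL-Analysis.Analysis"
begin

definition smean :: "nat \<Rightarrow> (nat \<Rightarrow> real) \<Rightarrow> real" where
  "smean n f = (\<Sum>i<n. f i) / real n"

definition wgt :: "('x \<Rightarrow> real^'p) \<Rightarrow> 'x \<Rightarrow> real^'p \<Rightarrow> real" where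
  "wgt F x \<gamma> = exp (- (\<gamma> \<bullet> F x))"

definition D_WL :: "nat \<Rightarrow> (nat \<Rightarrow> 'x) \<Rightarrow> (nat \<Rightarrow> real) \<Rightarrow> ('x \<Rightarrow> real^'p)
    \<Rightarrow> (real \<Rightarrow> real) \<Rightarrow> ('x \<Rightarrow> real) \<Rightarrow> ('x \<Rightarrow> real) \<Rightarrow> real^'p \<Rightarrow> real" where
  "D_WL n X R F \<psi> h h' \<gamma> =
     smean n (\<lambda>i. R i * wgt F (X i) \<gamma> * (\<psi> (h (X i)) - \<psi> (h' (X i))) * (h (X i) - h' (X i)))"

definition Sigma_tilde :: "nat \<Rightarrow> (nat \<Rightarrow> 'x) \<Rightarrow> (nat \<Rightarrow> real) \<Rightarrow> ('x \<Rightarrow> real^'p)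
    \<Rightarrow> real^'p \<Rightarrow> (real \<Rightarrow> real) \<Rightarrow> ('x \<Rightarrow> real^'q) \<Rightarrow> real^'q \<Rightarrow> real^'q^'q" where
  "Sigma_tilde n X R F \<gamma> \<psi>1 G a =
     (\<chi> j k. smean n (\<lambda>i. R i * wgt F (X i) \<gamma> * \<psi>1 (a \<bullet> G (X i)) * (G (X i) $ j) * (G (X i) $ k)))"

definition l1norm :: "real^'q \<Rightarrow> real" where
  "l1norm b = (\<Sum>j\<in>UNIV. \<bar>b $ j\<bar>)"

definition expfrac :: "real \<Rightarrow> real" where
  "expfrac c = (if c = 0 then 1 else (1 - exp (- c)) / c)"

end

theory Submission
  imports Defs
begin

text \<open>The condition on \<open>\<psi>1\<close> bounds its decay along an interval of length \<open>s\<close> by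
  \<open>exp (- C3 * s)\<close>; integrating this bound gives
  \<open>\<psi> (v + d) - \<psi> v \<ge> \<psi>1 v * d * expfrac (C3 * \<bar>d\<bar>)\<close> for the linear predictors
  \<open>v = \<alpha>t \<bullet> G\<close>, \<open>d = b \<bullet> G\<close>. As \<open>\<bar>b \<bullet> G\<bar> \<le> C4 * \<parallel>b\<parallel>\<^sub>1\<close> and \<open>expfrac\<close> is
  antitone, multiplying by \<open>d\<close> and averaging yields the quadratic form of
  \<open>Sigma_tilde\<close> times \<open>expfrac (C3 * C4 * \<parallel>b\<parallel>\<^sub>1)\<close>.\<close>

text \<open>\<open>exp_decay_integral C s\<close> is \<open>\<integral>\<^sub>0\<^sup>s exp (- C * t) dt\<close>.\<close>
definition exp_decay_integral :: "real \<Rightarrow> real \<Rightarrow> real" where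
  "exp_decay_integral C s = (if C = 0 then s else (1 - exp (- C * s)) / C)"

lemma has_real_derivative_exp_decay_integral:
  "(exp_decay_integral C has_real_derivative exp (- C * s)) (at s)"
proof (cases "C = 0")
  case True
  then show ?thesis by (simp add: exp_decay_integral_def[abs_def])
next
  case False
  then have "((\<lambda>s. (1 - exp (- C * s)) / C) has_real_derivative exp (- C * s)) (at s)"
    by (auto intro!: derivative_eq_intros)
  with False show ?thesis by (simp add: exp_decay_integral_def[abs_def])
qed

lemma exp_decay_integral_0 [simp]: "exp_decay_integral C 0 = 0"
  by (simp add: exp_decay_integral_def)

lemma mult_expfrac_eq_exp_decay_integral: "s * expfrac (C * s) = exp_decay_integral C s"
  by (auto simp: expfrac_def exp_decay_integral_def field_simps)

lemma expfrac_antimono: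
  assumes "0 \<le> a" "a \<le> b"
  shows "expfrac b \<le> expfrac a"
proof (cases "a = 0")
  case True
  have "1 - exp (- b) \<le> b" using exp_ge_add_one_self[of "- b"] by simp
  then show ?thesis using True assms by (auto simp: expfrac_def)
next
  case False
  let ?f = "\<lambda>c. (1 - exp (- c)) / c"
  have "?f b \<le> ?f a"
  proof (rule deriv_nonpos_imp_antimono[where g = ?f and g' = "\<lambda>c. (exp (- c) * (c + 1) - 1) / c\<^sup>2"])
    fix x assume "x \<in> {a..b}"
    with False assms have x: "x > 0" by simp
    then show "(?f has_real_derivative (exp (- x) * (x + 1) - 1) / x\<^sup>2) (at x)"
      by (auto intro!: derivative_eq_intros simp: field_simps power2_eq_square)
    have "exp (- x) * (x + 1) \<le> exp (- x) * exp x"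
      using exp_ge_add_one_self[of x] by (simp add: add.commute)
    then show "(exp (- x) * (x + 1) - 1) / x\<^sup>2 \<le> 0"
      by (simp add: divide_nonpos_nonneg flip: exp_add)
  qed (use assms in auto)
  then show ?thesis using False assms by (simp add: expfrac_def)
qed

lemma increment_ge_expfrac:
  fixes \<psi> \<psi>1 :: "real \<Rightarrow> real"
  assumes deriv: "\<And>u. (\<psi> has_real_derivative \<psi>1 u) (at u)"
    and decay: "\<And>u u'. \<psi>1 u \<le> \<psi>1 u' * exp (C * \<bar>u - u'\<bar>)"
    and "d \<ge> 0"
  shows "\<psi>1 v * (d * expfrac (C * d)) \<le> \<psi> (v + d) - \<psi> v"
proof -
  have shifted: "((\<lambda>s. \<psi> (v + s)) has_real_derivative \<psi>1 (v + s)) (at s)" for s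
    using DERIV_shift[of \<psi> "\<psi>1 (s + v)" s v] deriv by (simp add: add.commute)
  let ?h = "\<lambda>s. \<psi> (v + s) - \<psi>1 v * exp_decay_integral C s"
  have "?h 0 \<le> ?h d"
  proof (rule deriv_nonneg_imp_mono[where g = ?h and g' = "\<lambda>s. \<psi>1 (v + s) - \<psi>1 v * exp (- C * s)"])
    fix s assume s: "s \<in> {0..d}"
    show "(?h has_real_derivative \<psi>1 (v + s) - \<psi>1 v * exp (- C * s)) (at s)"
      using shifted has_real_derivative_exp_decay_integral
      by (auto intro!: derivative_eq_intros)
    have "\<psi>1 v * exp (- C * s) \<le> \<psi>1 (v + s) * exp (C * s) * exp (- C * s)"
      using decay[of v "v + s"] s by (simp add: mult_right_mono)
    then show "0 \<le> \<psi>1 (v + s) - \<psi>1 v * exp (- C * s)"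
      by (simp add: mult.assoc flip: exp_add)
  qed (use \<open>d \<ge> 0\<close> in auto)
  then show ?thesis
    by (simp add: mult_expfrac_eq_exp_decay_integral)
qed

lemma increment_times_step_ge_expfrac:
  fixes \<psi> \<psi>1 :: "real \<Rightarrow> real"
  assumes deriv: "\<And>u. (\<psi> has_real_derivative \<psi>1 u) (at u)"
    and decay: "\<And>u u'. \<psi>1 u \<le> \<psi>1 u' * exp (C * \<bar>u - u'\<bar>)"
  shows "\<psi>1 v * d\<^sup>2 * expfrac (C * \<bar>d\<bar>) \<le> (\<psi> (v + d) - \<psi> v) * d"
proof (cases "d \<ge> 0")
  case True
  from mult_right_mono[OF increment_ge_expfrac[OF deriv decay True, of v] True] True
  show ?thesis by (simp add: power2_eq_square algebra_simps)
next
  case False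
  txt \<open>Reflect: \<open>u \<mapsto> - \<psi> (- u)\<close> satisfies the same hypotheses with derivative \<open>\<psi>1 (- u)\<close>.\<close>
  have "((\<lambda>u. - \<psi> (- u)) has_real_derivative \<psi>1 (- u)) (at u)" for u
    using DERIV_minus[OF iffD1[OF DERIV_mirror deriv[of "- u"]]] by simp
  moreover have "\<psi>1 (- u) \<le> \<psi>1 (- u') * exp (C * \<bar>u - u'\<bar>)" for u u'
    using decay[of "- u" "- u'"] by (simp add: abs_minus_commute)
  ultimately have "\<psi>1 v * (- d * expfrac (C * - d)) \<le> \<psi> v - \<psi> (v + d)"
    using increment_ge_expfrac[of "\<lambda>u. - \<psi> (- u)" "\<lambda>u. \<psi>1 (- u)" C "- d" "- v"] False
    by (simp add: add.commute)
  from mult_right_mono[OF this, of "- d"] False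
  show ?thesis by (simp add: power2_eq_square algebra_simps)
qed

lemma increment_times_step_ge_expfrac_bound:
  fixes \<psi> \<psi>1 :: "real \<Rightarrow> real"
  assumes deriv: "\<And>u. (\<psi> has_real_derivative \<psi>1 u) (at u)"
    and decay: "\<And>u u'. \<psi>1 u \<le> \<psi>1 u' * exp (C * \<bar>u - u'\<bar>)"
    and "C \<ge> 0" "\<psi>1 v \<ge> 0" "\<bar>d\<bar> \<le> D"
  shows "\<psi>1 v * d\<^sup>2 * expfrac (C * D) \<le> (\<psi> (v + d) - \<psi> v) * d"
proof -
  have "expfrac (C * D) \<le> expfrac (C * \<bar>d\<bar>)"
    using assms(3,5) by (intro expfrac_antimono mult_left_mono) auto
  then have "\<psi>1 v * d\<^sup>2 * expfrac (C * D) \<le> \<psi>1 v * d\<^sup>2 * expfrac (C * \<bar>d\<bar>)"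
    using assms(4) by (intro mult_left_mono) auto
  also have "\<dots> \<le> (\<psi> (v + d) - \<psi> v) * d"
    using deriv decay by (rule increment_times_step_ge_expfrac)
  finally show ?thesis .
qed

lemma abs_inner_le_l1norm:
  assumes "\<And>j. \<bar>g $ j\<bar> \<le> C"
  shows "\<bar>b \<bullet> g\<bar> \<le> C * l1norm b"
proof -
  have "\<bar>b \<bullet> g\<bar> \<le> (\<Sum>j\<in>UNIV. \<bar>b $ j * g $ j\<bar>)"
    unfolding inner_vec_def inner_real_def by (rule sum_abs)
  also have "\<dots> \<le> (\<Sum>j\<in>UNIV. \<bar>b $ j\<bar> * C)"
    by (intro sum_mono) (simp add: abs_mult mult_left_mono assms)
  finally show ?thesis by (simp add: l1norm_def sum_distrib_left mult.commute)
qed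

lemma inner_Sigma_tilde_mult:
  fixes b :: "real^'q"
  shows "b \<bullet> (Sigma_tilde n X R F \<gamma> \<psi>1 G a *v b)
    = smean n (\<lambda>i. R i * wgt F (X i) \<gamma> * \<psi>1 (a \<bullet> G (X i)) * (b \<bullet> G (X i))\<^sup>2)"
proof -
  define c where "c i = R i * wgt F (X i) \<gamma> * \<psi>1 (a \<bullet> G (X i))" for i
  have square: "(b \<bullet> g)\<^sup>2 = (\<Sum>j\<in>UNIV. \<Sum>k\<in>UNIV. b $ j * g $ j * (b $ k * g $ k))" for g :: "real^'q"
    by (simp add: inner_vec_def power2_eq_square sum_product)
  show ?thesis
    unfolding Sigma_tilde_def smean_def c_def[symmetric] square
    by (simp add: inner_vec_def matrix_vector_mult_def sum_divide_distrib sum_distrib_left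
        sum_distrib_right sum.swap[of _ "{..<n}"] algebra_simps)
qed

lemma smean_mono: "(\<And>i. i < n \<Longrightarrow> f i \<le> g i) \<Longrightarrow> smean n f \<le> smean n g"
  unfolding smean_def by (intro divide_right_mono sum_mono) auto

lemma smean_mult_right: "smean n (\<lambda>i. f i * c) = smean n f * c"
  unfolding smean_def by (simp add: sum_distrib_right)

theorem lemmaS16:
  fixes n :: nat and X :: "nat \<Rightarrow> 'x" and R :: "nat \<Rightarrow> real"
    and F :: "'x \<Rightarrow> real^'p" and \<gamma>bar :: "real^'p"
    and G :: "'x \<Rightarrow> real^'q"
    and \<psi> \<psi>1 :: "real \<Rightarrow> real" and C3 C4 :: real
    and \<alpha> \<alpha>t :: "real^'q"
  assumes R01: "\<forall>i<n. R i \<in> {0, 1}"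
    and psi_mono: "mono \<psi>"
    and psi_deriv: "\<forall>u. (\<psi> has_real_derivative \<psi>1 u) (at u)"
    and C3_nonneg: "C3 \<ge> 0"
    and psi1_bound: "\<forall>u u'. \<psi>1 u \<le> \<psi>1 u' * exp (C3 * \<bar>u - u'\<bar>)"
    and G_bound: "\<forall>i<n. \<forall>j. \<bar>G (X i) $ j\<bar> \<le> C4"
  shows "D_WL n X R F \<psi> (\<lambda>x. \<alpha> \<bullet> G x) (\<lambda>x. \<alpha>t \<bullet> G x) \<gamma>bar
         \<ge> ((\<alpha> - \<alpha>t) \<bullet> (Sigma_tilde n X R F \<gamma>bar \<psi>1 G \<alpha>t *v (\<alpha> - \<alpha>t)))
           * expfrac (C3 * C4 * l1norm (\<alpha> - \<alpha>t))"
proof -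
  define b where "b = \<alpha> - \<alpha>t"
  have psi1_nonneg: "\<psi>1 u \<ge> 0" for u
    by (rule mono_on_imp_deriv_nonneg[of UNIV \<psi>]) (use psi_mono psi_deriv in auto)
  have "R i * wgt F (X i) \<gamma>bar * \<psi>1 (\<alpha>t \<bullet> G (X i)) * (b \<bullet> G (X i))\<^sup>2
          * expfrac (C3 * (C4 * l1norm b))
      \<le> R i * wgt F (X i) \<gamma>bar * (\<psi> (\<alpha> \<bullet> G (X i)) - \<psi> (\<alpha>t \<bullet> G (X i)))
          * (\<alpha> \<bullet> G (X i) - \<alpha>t \<bullet> G (X i))" if i: "i < n" for i
  proof -
    have "\<bar>b \<bullet> G (X i)\<bar> \<le> C4 * l1norm b"
      using G_bound i by (intro abs_inner_le_l1norm) auto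
    then have step: "\<psi>1 (\<alpha>t \<bullet> G (X i)) * (b \<bullet> G (X i))\<^sup>2 * expfrac (C3 * (C4 * l1norm b))
        \<le> (\<psi> (\<alpha>t \<bullet> G (X i) + b \<bullet> G (X i)) - \<psi> (\<alpha>t \<bullet> G (X i))) * (b \<bullet> G (X i))"
      using psi_deriv psi1_bound C3_nonneg psi1_nonneg
      by (intro increment_times_step_ge_expfrac_bound) auto
    have weight: "R i * wgt F (X i) \<gamma>bar \<ge> 0"
      using R01 i by (auto simp: wgt_def)
    have "\<alpha> \<bullet> G (X i) = \<alpha>t \<bullet> G (X i) + b \<bullet> G (X i)"
      unfolding b_def by (simp add: inner_diff_left)
    with mult_left_mono[OF step weight] show ?thesis by (simp add: mult.assoc)
  qed
  then have "smean n (\<lambda>i. R i * wgt F (X i) \<gamma>bar * \<psi>1 (\<alpha>t \<bullet> G (X i)) * (b \<bullet> G (X i))\<^sup>2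
                 * expfrac (C3 * (C4 * l1norm b)))
      \<le> D_WL n X R F \<psi> (\<lambda>x. \<alpha> \<bullet> G x) (\<lambda>x. \<alpha>t \<bullet> G x) \<gamma>bar"
    unfolding D_WL_def by (rule smean_mono)
  then show ?thesis
    unfolding b_def[symmetric] mult.assoc[of C3] inner_Sigma_tilde_mult smean_mult_right .
qed

end
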